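(* For every $n\ge 1$, $N(\mathbb{R}^n)\le 3n$; that is, there exists a totally skew embedding $\mathbb{R}^n\to\mathbb{R}^{3n}$.
   Context: For a submanifold $M\subseteq\mathbb{R}^N$ and distinct points $p,q\in M$, $M$ is totally skew at $p$ and $q$ if for every (affine) line tangent to $M$ at $p$ and every line tangent to $M$ at $q$, the two lines are neither parallel nor intersecting. A totally skew embedding of a manifold $M$ is an embedding $f:M\to\mathbb{R}^N$ such that $f(M)$ is totally skew at every pair of distinct points. $N(M)$ denotes the smallest $N$ for which a totally skew embedding $M\to\mathbb{R}^N$ exists. *)

theory Defs
  imports "HOL-Analysis.Analysis"
begin

text \<open>C-infinity smoothness: all iterated directional derivatives exist everywhere.\<close>
coinductive smooth_map :: "('a::real_normed_vector \<Rightarrow> 'b::real_normed_vector) \<Rightarrow> bool" where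
  "\<lbrakk>\<And>x. (g has_derivative g' x) (at x); \<And>v. smooth_map (\<lambda>x. g' x v)\<rbrakk> \<Longrightarrow> smooth_map g"

definition smooth_embedding :: "('a::euclidean_space \<Rightarrow> 'b::euclidean_space) \<Rightarrow> bool" where
  "smooth_embedding f \<longleftrightarrow> smooth_map f
     \<and> (\<forall>p. inj (frechet_derivative f (at p)))
     \<and> (\<exists>g. homeomorphism UNIV (range f) f g)"

definition tangent_lines :: "('a::euclidean_space \<Rightarrow> 'b::euclidean_space) \<Rightarrow> 'a \<Rightarrow> 'b set set" where
  "tangent_lines f p = {{f p + t *\<^sub>R u | t. True} | u. u \<in> range (frechet_derivative f (at p)) \<and> u \<noteq> 0}"

definition parallel_sets :: "'b::real_vector set \<Rightarrow> 'b set \<Rightarrow> bool" where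
  "parallel_sets L1 L2 \<longleftrightarrow> (\<exists>c. L2 = (\<lambda>x. c + x) ` L1)"

definition totally_skew_at :: "('a::euclidean_space \<Rightarrow> 'b::euclidean_space) \<Rightarrow> 'a \<Rightarrow> 'a \<Rightarrow> bool" where
  "totally_skew_at f p q \<longleftrightarrow>
     (\<forall>L1 \<in> tangent_lines f p. \<forall>L2 \<in> tangent_lines f q.
        \<not> parallel_sets L1 L2 \<and> L1 \<inter> L2 = {})"

definition totally_skew_embedding :: "('a::euclidean_space \<Rightarrow> 'b::euclidean_space) \<Rightarrow> bool" where
  "totally_skew_embedding f \<longleftrightarrow> smooth_embedding f \<and> (\<forall>p q. p \<noteq> q \<longrightarrow> totally_skew_at f p q)"

end

theory Submission
  imports Defs "HOL-Computational_Algebra.Polynomial_FPS"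
begin

(* Identify x in R^n with the polynomial X_x = x_1 t + ... + x_n t^n and send x to the coefficients
   of t, ..., t^(3n) of exp X_x; the differential at p sends h to the same coefficients of
   exp X_p * X_h. If tangent lines at p ~= q met or were parallel, then with D = X_q - X_p ~= 0 one
   would get polynomials M, A of degree at most n with exp D * M = A modulo t^(3n+1). Since
   Y = exp D * M solves M Y' = (D' M + M') Y, the polynomial M A' - (D' M + M') A, of degree below 3n,
   vanishes modulo t^(3n) and hence identically; comparing degrees forces M = 0 or A = 0, and then
   all data vanish. The same reasoning shows that already the first n coordinates of the map are
   injective, so invariance of domain makes it a homeomorphism onto its image. *)

section \<open>Exponentials of formal power series\<close>

(* exp A; only meaningful when A has zero constant term, which is assumed wherever it matters. *)
definition fps_Exp :: "'a::field fps \<Rightarrow> 'a fps" where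
  "fps_Exp A = fps_exp 1 oo A"

lemma fps_Exp_nth_0 [simp]: "fps_nth (fps_Exp A) 0 = 1"
  by (simp add: fps_Exp_def)

lemma fps_Exp_nth: "fps_nth (fps_Exp A) k = (\<Sum>i=0..k. fps_nth (A ^ i) k / fact i)"
  by (simp add: fps_Exp_def fps_compose_nth fps_exp_def)

lemma fps_deriv_fps_Exp:
  fixes A :: "'a::field_char_0 fps"
  assumes "fps_nth A 0 = 0"
  shows "fps_deriv (fps_Exp A) = fps_deriv A * fps_Exp A"
  using assms by (simp add: fps_Exp_def fps_compose_deriv mult.commute)

lemma fps_deriv_eq_0_imp_eq_1:
  fixes Z :: "'a::field_char_0 fps"
  assumes "fps_deriv Z = 0" "fps_nth Z 0 = 1"
  shows "Z = 1"
  using assms fps_deriv_eq_0_iff[of Z] by simp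

lemma fps_Exp_mult_uminus:
  fixes A :: "'a::field_char_0 fps"
  assumes "fps_nth A 0 = 0"
  shows "fps_Exp A * fps_Exp (-A) = 1"
proof (rule fps_deriv_eq_0_imp_eq_1)
  show "fps_deriv (fps_Exp A * fps_Exp (-A)) = 0"
    using assms by (simp add: fps_deriv_mult fps_deriv_fps_Exp algebra_simps)
qed simp

lemma fps_Exp_add:
  fixes A B :: "'a::field_char_0 fps"
  assumes "fps_nth A 0 = 0" "fps_nth B 0 = 0"
  shows "fps_Exp (A + B) = fps_Exp A * fps_Exp B"
proof -
  have "fps_Exp A * fps_Exp B * fps_Exp (-(A + B)) = 1"
  proof (rule fps_deriv_eq_0_imp_eq_1)
    show "fps_deriv (fps_Exp A * fps_Exp B * fps_Exp (-(A + B))) = 0"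
      using assms by (simp add: fps_deriv_mult fps_deriv_fps_Exp algebra_simps)
  qed simp
  then have "fps_Exp A * fps_Exp B = fps_Exp A * fps_Exp B * (fps_Exp (-(A + B)) * fps_Exp (A + B))"
    using fps_Exp_mult_uminus[of "A + B"] assms by (simp add: mult.commute)
  also have "\<dots> = fps_Exp (A + B)"
    using \<open>fps_Exp A * fps_Exp B * fps_Exp (-(A + B)) = 1\<close> by (metis mult.assoc mult_1)
  finally show ?thesis ..
qed

lemma fps_Exp_cancel_left:
  fixes A B :: "'a::field_char_0 fps"
  assumes "fps_nth A 0 = 0"
  shows "fps_Exp (-A) * (fps_Exp A * B) = B"
  using fps_Exp_mult_uminus[OF assms] by (metis mult.assoc mult.commute mult_1)

definition agree_upto :: "nat \<Rightarrow> 'a fps \<Rightarrow> 'a fps \<Rightarrow> bool" where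
  "agree_upto m U V \<longleftrightarrow> (\<forall>k\<le>m. fps_nth U k = fps_nth V k)"

lemma agree_upto_mult_left:
  fixes U V W :: "'a::comm_semiring_1 fps"
  shows "agree_upto m U V \<Longrightarrow> agree_upto m (W * U) (W * V)"
  unfolding agree_upto_def by (auto simp: fps_mult_nth intro!: sum.cong)

lemma agree_upto_mono: "agree_upto m U V \<Longrightarrow> k \<le> m \<Longrightarrow> agree_upto k U V"
  unfolding agree_upto_def by auto

lemma agree_upto_fps_deriv:
  "agree_upto (Suc m) U V \<Longrightarrow> agree_upto m (fps_deriv U) (fps_deriv V)"
  unfolding agree_upto_def by auto

lemma agree_upto_fps_Exp_cancel:
  fixes D U V :: "'a::field_char_0 fps"
  assumes "fps_nth D 0 = 0" "agree_upto m (fps_Exp D * U) (fps_Exp D * V)"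
  shows "agree_upto m U V"
  using agree_upto_mult_left[OF assms(2), of "fps_Exp (-D)"]
  by (simp add: fps_Exp_cancel_left[OF assms(1)])

lemma agree_upto_fps_Exp_eq_1:
  fixes A :: "'a::field_char_0 fps"
  assumes "fps_nth A 0 = 0" "agree_upto m (fps_Exp A) 1"
  shows "agree_upto m A 0"
proof (cases m)
  case (Suc m')
  have "agree_upto m' (fps_Exp A * fps_deriv A) (fps_Exp A * 0)"
    using agree_upto_fps_deriv[of m' "fps_Exp A" 1] assms Suc
    by (simp add: fps_deriv_fps_Exp mult.commute)
  then have "agree_upto m' (fps_deriv A) 0"
    by (rule agree_upto_fps_Exp_cancel[OF assms(1)])
  then show ?thesis
    unfolding agree_upto_def
  proof (intro allI impI)
    fix k assume "k \<le> m"
    then show "fps_nth A k = fps_nth 0 k"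
      using assms(1) Suc \<open>agree_upto m' (fps_deriv A) 0\<close>
      by (cases k) (auto simp: agree_upto_def simp del: of_nat_Suc)
  qed
qed (use assms in \<open>simp add: agree_upto_def\<close>)

lemma agree_upto_fps_Exp_mult_ode:
  fixes D M A :: "'a::field_char_0 fps"
  assumes "fps_nth D 0 = 0" "agree_upto (Suc m) (fps_Exp D * M) A"
  shows "agree_upto m (M * fps_deriv A) ((fps_deriv D * M + fps_deriv M) * A)"
proof -
  define Y where "Y = fps_Exp D * M"
  have Y_ode: "M * fps_deriv Y = (fps_deriv D * M + fps_deriv M) * Y"
    unfolding Y_def using assms(1) by (simp add: fps_deriv_mult fps_deriv_fps_Exp algebra_simps)
  have "agree_upto m (M * fps_deriv Y) (M * fps_deriv A)"
    using assms(2) unfolding Y_def by (intro agree_upto_mult_left agree_upto_fps_deriv)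
  moreover have "agree_upto m ((fps_deriv D * M + fps_deriv M) * Y) ((fps_deriv D * M + fps_deriv M) * A)"
    using agree_upto_mono[OF assms(2), of m] unfolding Y_def by (rule agree_upto_mult_left) simp
  ultimately show ?thesis
    using Y_ode unfolding agree_upto_def by simp
qed

lemma poly_eq_0_if_low_coeffs_0:
  assumes "degree p \<le> m" "\<And>k. k \<le> m \<Longrightarrow> coeff p k = 0"
  shows "p = 0"
proof (rule poly_eqI)
  fix k show "coeff p k = coeff 0 k"
    using assms by (cases "k \<le> m") (auto intro: coeff_eq_0)
qed

lemma poly_ode_solution_trivial:
  fixes D M A :: "'a::field_char_0 poly"
  assumes "degree D \<noteq> 0" "M * pderiv A = (pderiv D * M + pderiv M) * A"
  shows "M = 0 \<or> A = 0"
proof (rule ccontr)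
  assume "\<not> (M = 0 \<or> A = 0)"
  then have "M \<noteq> 0" "A \<noteq> 0" by auto
  have "pderiv D \<noteq> 0"
    using assms(1) by (simp add: pderiv_eq_0_iff)
  have eq: "pderiv D * M * A = M * pderiv A - pderiv M * A"
    using assms(2) by (simp add: algebra_simps)
  have lhs: "degree (pderiv D * M * A) = degree (pderiv D) + degree M + degree A"
    using \<open>pderiv D \<noteq> 0\<close> \<open>M \<noteq> 0\<close> \<open>A \<noteq> 0\<close> by (simp add: degree_mult_eq)
  have "pderiv D * M * A \<noteq> 0"
    using \<open>pderiv D \<noteq> 0\<close> \<open>M \<noteq> 0\<close> \<open>A \<noteq> 0\<close> by simp
  then have "degree M + degree A \<noteq> 0"
    using eq by (metis add_is_0 pderiv_eq_0_iff diff_self mult_zero_left mult_zero_right)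
  have "degree (M * pderiv A) \<le> degree M + degree A - 1"
    using degree_mult_le[of M "pderiv A"] degree_pderiv[of A] pderiv_eq_0_iff[of A]
    by (cases "degree A = 0") auto
  moreover have "degree (pderiv M * A) \<le> degree M + degree A - 1"
    using degree_mult_le[of "pderiv M" A] degree_pderiv[of M] pderiv_eq_0_iff[of M]
    by (cases "degree M = 0") auto
  ultimately have "degree (pderiv D * M * A) \<le> degree M + degree A - 1"
    unfolding eq by (rule degree_diff_le)
  with lhs \<open>degree M + degree A \<noteq> 0\<close> show False by arith
qed

lemma fps_Exp_mult_agree_poly_imp_0:
  fixes D M A :: "'a::field_char_0 poly"
  assumes "1 \<le> n" "degree D \<le> n" "degree M \<le> n" "degree A \<le> n"
    and "coeff D 0 = 0" "D \<noteq> 0"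
    and agree: "agree_upto (3 * n) (fps_Exp (fps_of_poly D) * fps_of_poly M) (fps_of_poly A)"
  shows "M = 0"
proof -
  define R where "R = M * pderiv A - (pderiv D * M + pderiv M) * A"
  have "agree_upto (3 * n - 1) (fps_of_poly (M * pderiv A)) (fps_of_poly ((pderiv D * M + pderiv M) * A))"
    using agree_upto_fps_Exp_mult_ode[of "fps_of_poly D" "3 * n - 1"] agree assms(1,5)
    by (simp add: fps_of_poly_simps fps_of_poly_pderiv)
  then have "coeff R k = 0" if "k \<le> 3 * n - 1" for k
    using that by (simp add: R_def agree_upto_def)
  moreover have "degree R \<le> 3 * n - 1"
  proof -
    have "degree (M * pderiv A) \<le> 3 * n - 1"
      using degree_mult_le[of M "pderiv A"] degree_pderiv[of A] assms(1,3,4) by linarith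
    moreover have "degree (pderiv D * M + pderiv M) \<le> 2 * n - 1"
    proof (rule degree_add_le)
      show "degree (pderiv D * M) \<le> 2 * n - 1"
        using degree_mult_le[of "pderiv D" M] degree_pderiv[of D] assms(1-3) by linarith
      show "degree (pderiv M) \<le> 2 * n - 1"
        using degree_pderiv[of M] assms(1,3) by linarith
    qed
    then have "degree ((pderiv D * M + pderiv M) * A) \<le> 3 * n - 1"
      using degree_mult_le[of "pderiv D * M + pderiv M" A] assms(1,4) by linarith
    ultimately show ?thesis
      unfolding R_def by (rule degree_diff_le)
  qed
  ultimately have "R = 0"
    by (rule poly_eq_0_if_low_coeffs_0[rotated])
  moreover have "degree D \<noteq> 0"
    using assms(5,6) by (metis degree_0_id pCons_0_0)
  ultimately have "M = 0 \<or> A = 0"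
    using poly_ode_solution_trivial[of D M A] by (simp add: R_def)
  then show ?thesis
  proof
    assume "A = 0"
    then have "agree_upto (3 * n) (fps_of_poly M) 0"
      using agree agree_upto_fps_Exp_cancel[of "fps_of_poly D" "3 * n" "fps_of_poly M" 0] assms(5)
      by simp
    then show "M = 0"
      using assms(1,3) by (intro poly_eq_0_if_low_coeffs_0[of M "3 * n"]) (auto simp: agree_upto_def)
  qed
qed

section \<open>Vectors as polynomials without constant term\<close>

definition fin_index :: "'a::finite \<Rightarrow> nat" where
  "fin_index = (SOME h. bij_betw h (UNIV :: 'a set) {0..<CARD('a)})"

lemma bij_betw_fin_index: "bij_betw (fin_index :: 'a::finite \<Rightarrow> nat) UNIV {0..<CARD('a)}"
  unfolding fin_index_def by (rule someI_ex[OF ex_bij_betw_finite_nat[OF finite]])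

lemma fin_index_eq_iff [simp]: "fin_index (i :: 'a::finite) = fin_index j \<longleftrightarrow> i = j"
  using bij_betw_fin_index[where 'a='a] by (auto simp: bij_betw_def inj_on_def)

lemma fin_index_less: "fin_index (i :: 'a::finite) < CARD('a)"
  using bij_betw_fin_index[where 'a='a] by (auto simp: bij_betw_def)

lemma fin_index_surj: "k < CARD('a::finite) \<Longrightarrow> \<exists>i :: 'a. fin_index i = k"
  using bij_betw_fin_index[where 'a='a] by (metis atLeastLessThan_iff bij_betw_def imageE zero_le)

definition vec_poly :: "'a::comm_ring_1 ^ 'n \<Rightarrow> 'a poly" where
  "vec_poly x = (\<Sum>i\<in>UNIV. monom (x $ i) (Suc (fin_index i)))"

definition vec_fps :: "'a::comm_ring_1 ^ 'n \<Rightarrow> 'a fps" where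
  "vec_fps x = fps_of_poly (vec_poly x)"

definition coeff_vec :: "'a fps \<Rightarrow> 'a ^ 'm" where
  "coeff_vec F = (\<chi> j. fps_nth F (Suc (fin_index j)))"

lemma coeff_vec_poly: "coeff (vec_poly x) k = (\<Sum>i\<in>UNIV. if Suc (fin_index i) = k then x $ i else 0)"
  unfolding vec_poly_def by (simp add: coeff_sum coeff_monom)

lemma coeff_vec_poly_0 [simp]: "coeff (vec_poly x) 0 = 0"
  by (simp add: coeff_vec_poly)

lemma coeff_vec_poly_Suc_fin_index [simp]: "coeff (vec_poly x) (Suc (fin_index i)) = x $ i"
proof -
  have "coeff (vec_poly x) (Suc (fin_index i)) = (\<Sum>j\<in>UNIV. if j = i then x $ j else 0)"
    unfolding coeff_vec_poly by (intro sum.cong) auto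
  then show ?thesis by simp
qed

lemma degree_vec_poly: "degree (vec_poly (x :: 'a::comm_ring_1 ^ 'n)) \<le> CARD('n)"
  unfolding vec_poly_def
  by (intro degree_sum_le order.trans[OF degree_monom_le]) (auto simp: Suc_le_eq fin_index_less)

lemma vec_poly_add: "vec_poly (x + y) = vec_poly x + vec_poly y"
  by (rule poly_eqI) (simp add: coeff_vec_poly sum.distrib[symmetric] if_distrib cong: if_cong)

lemma vec_poly_eq_0_iff [simp]: "vec_poly x = 0 \<longleftrightarrow> x = 0"
proof
  assume "vec_poly x = 0"
  then show "x = 0"
    by (metis coeff_vec_poly_Suc_fin_index coeff_0 vec_eq_iff zero_index)
qed (simp add: vec_poly_def)

lemma fps_nth_vec_fps: "fps_nth (vec_fps x) k = coeff (vec_poly x) k"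
  by (simp add: vec_fps_def)

lemma fps_nth_vec_fps_0 [simp]: "fps_nth (vec_fps x) 0 = 0"
  by (simp add: fps_nth_vec_fps)

lemma fps_nth_vec_fps_Suc_fin_index [simp]: "fps_nth (vec_fps x) (Suc (fin_index i)) = x $ i"
  by (simp add: fps_nth_vec_fps)

lemma vec_fps_add: "vec_fps (x + y) = vec_fps x + vec_fps y"
  by (simp add: vec_fps_def vec_poly_add fps_of_poly_add)

lemma vec_fps_0 [simp]: "vec_fps 0 = 0"
  by (simp add: vec_fps_def vec_poly_def)

lemma coeff_vec_vec_fps [simp]: "coeff_vec (vec_fps x) = x"
  by (simp add: coeff_vec_def vec_eq_iff)

lemma coeff_vec_0 [simp]: "coeff_vec 0 = 0"
  by (simp add: coeff_vec_def vec_eq_iff)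

lemma coeff_vec_eq_if_agree_upto:
  assumes "agree_upto m U V" "CARD('m) \<le> m"
  shows "(coeff_vec U :: 'a ^ 'm::finite) = coeff_vec V"
proof -
  have "Suc (fin_index j) \<le> m" for j :: 'm
    using fin_index_less[of j] assms(2) by linarith
  then show ?thesis
    using assms(1) by (simp add: coeff_vec_def vec_eq_iff agree_upto_def)
qed

lemma agree_upto_if_coeff_vec_eq:
  assumes "(coeff_vec U :: 'a ^ 'm::finite) = coeff_vec V" "fps_nth U 0 = fps_nth V 0"
  shows "agree_upto CARD('m) U V"
  unfolding agree_upto_def
proof (intro allI impI)
  fix k assume "k \<le> CARD('m)"
  show "fps_nth U k = fps_nth V k"
  proof (cases k)
    case (Suc k')
    with \<open>k \<le> CARD('m)\<close> obtain j :: 'm where "fin_index j = k'"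
      using fin_index_surj by (metis Suc_le_eq)
    then show ?thesis
      using arg_cong[OF assms(1), of "\<lambda>y. y $ j"] Suc by (simp add: coeff_vec_def)
  qed (use assms(2) in simp)
qed

lemma coeff_vec_vec_fps_coeff_vec:
  assumes "CARD('n) \<le> CARD('m)"
  shows "(coeff_vec (vec_fps (coeff_vec F :: 'a::comm_ring_1 ^ 'm::finite)) :: 'a ^ 'n::finite) = coeff_vec F"
proof (rule vec_eq_iff[THEN iffD2, rule_format])
  fix i :: 'n
  obtain j :: 'm where "fin_index j = fin_index i"
    using fin_index_surj fin_index_less[of i] assms by (metis order_less_le_trans)
  then show "coeff_vec (vec_fps (coeff_vec F :: 'a ^ 'm)) $ i = (coeff_vec F :: 'a ^ 'n) $ i"
    by (metis coeff_vec_def fps_nth_vec_fps_Suc_fin_index vec_lambda_beta)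
qed

lemma vec_fps_scaleR: "vec_fps (c *\<^sub>R x) = fps_const c * vec_fps (x :: real ^ 'n)"
  by (rule fps_ext) (simp add: fps_nth_vec_fps coeff_vec_poly sum_distrib_left if_distrib cong: if_cong)

lemma fps_Exp_vec_fps_shift:
  fixes x y :: "'a::field_char_0 ^ 'n"
  shows "fps_Exp (vec_fps y) = fps_Exp (vec_fps x) * fps_Exp (vec_fps (y - x))"
  using fps_Exp_add[of "vec_fps x" "vec_fps (y - x)"] vec_fps_add[of x "y - x"] by simp

section \<open>Coefficientwise derivatives\<close>

lemma has_derivative_vec_componentwise:
  fixes f :: "'a::real_normed_vector \<Rightarrow> real ^ 'm"
  assumes "\<And>j. ((\<lambda>x. f x $ j) has_derivative (\<lambda>h. f' h $ j)) (at a)"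
  shows "(f has_derivative f') (at a)"
proof -
  have "((\<lambda>x. f x \<bullet> b) has_derivative (\<lambda>h. f' h \<bullet> b)) (at a)" if "b \<in> Basis" for b :: "real ^ 'm"
  proof -
    from that obtain j where "b = axis j 1"
      by (auto simp: Basis_vec_def)
    then show ?thesis
      using assms[of j] by (simp add: cart_eq_inner_axis[symmetric])
  qed
  then show ?thesis
    using has_derivative_componentwise_within[of f f' a UNIV] by simp
qed

definition has_coeffwise_derivative ::
    "('a::real_normed_vector \<Rightarrow> real fps) \<Rightarrow> ('a \<Rightarrow> real fps) \<Rightarrow> 'a \<Rightarrow> bool" where
  "has_coeffwise_derivative A A' x \<longleftrightarrow>
     (\<forall>k. ((\<lambda>y. fps_nth (A y) k) has_derivative (\<lambda>v. fps_nth (A' v) k)) (at x))"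

lemma has_coeffwise_derivative_const: "has_coeffwise_derivative (\<lambda>y. C) (\<lambda>v. 0) x"
  by (simp add: has_coeffwise_derivative_def)

lemma has_coeffwise_derivative_vec_fps:
  fixes x :: "real ^ 'n"
  shows "has_coeffwise_derivative vec_fps vec_fps x"
  unfolding has_coeffwise_derivative_def fps_nth_vec_fps coeff_vec_poly
proof (intro allI has_derivative_sum)
  fix k and i :: 'n
  show "((\<lambda>y. if Suc (fin_index i) = k then y $ i else 0) has_derivative
      (\<lambda>v. if Suc (fin_index i) = k then v $ i else 0)) (at x)"
    by (cases "Suc (fin_index i) = k") (simp_all add: bounded_linear_imp_has_derivative[OF bounded_linear_vec_nth])
qed

lemma has_coeffwise_derivative_mult:
  assumes "has_coeffwise_derivative A A' x" "has_coeffwise_derivative B B' x"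
  shows "has_coeffwise_derivative (\<lambda>y. A y * B y) (\<lambda>v. A' v * B x + A x * B' v) x"
  unfolding has_coeffwise_derivative_def
proof
  fix k
  have "((\<lambda>y. \<Sum>i=0..k. fps_nth (A y) i * fps_nth (B y) (k - i)) has_derivative
        (\<lambda>v. \<Sum>i=0..k. fps_nth (A x) i * fps_nth (B' v) (k - i) + fps_nth (A' v) i * fps_nth (B x) (k - i))) (at x)"
    using assms unfolding has_coeffwise_derivative_def by (intro has_derivative_sum has_derivative_mult) auto
  then show "((\<lambda>y. fps_nth (A y * B y) k) has_derivative (\<lambda>v. fps_nth (A' v * B x + A x * B' v) k)) (at x)"
    by (simp add: fps_mult_nth sum.distrib algebra_simps)
qed

lemma has_coeffwise_derivative_power:
  assumes "has_coeffwise_derivative A A' x"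
  shows "has_coeffwise_derivative (\<lambda>y. A y ^ i) (\<lambda>v. of_nat i * A x ^ (i - 1) * A' v) x"
proof (induction i)
  case 0
  show ?case using has_coeffwise_derivative_const[of 1 x] by simp
next
  case (Suc i)
  have "A' v * A x ^ i + A x * (of_nat i * A x ^ (i - 1) * A' v) = of_nat (Suc i) * A x ^ i * A' v" for v
    by (cases i) (simp_all add: algebra_simps)
  then show ?case
    using has_coeffwise_derivative_mult[OF assms Suc] by simp
qed

lemma has_derivative_fps_Exp_vec_fps_at_0:
  "((\<lambda>h. fps_nth (fps_Exp (vec_fps h)) k) has_derivative (\<lambda>v. fps_nth (vec_fps v) k)) (at (0 :: real ^ 'n))"
proof -
  have "((\<lambda>h::real ^ 'n. \<Sum>i=0..k. fps_nth (vec_fps h ^ i) k / fact i) has_derivative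
      (\<lambda>v. \<Sum>i=0..k. fps_nth (of_nat i * vec_fps (0 :: real ^ 'n) ^ (i - 1) * vec_fps v) k / fact i)) (at 0)"
    using has_coeffwise_derivative_power[OF has_coeffwise_derivative_vec_fps[of 0]]
    unfolding has_coeffwise_derivative_def divide_inverse
    by (intro has_derivative_sum has_derivative_mult_left) auto
  moreover have "(\<Sum>i=0..k. fps_nth (of_nat i * vec_fps (0 :: real ^ 'n) ^ (i - 1) * vec_fps v) k / fact i)
      = fps_nth (vec_fps v) k" for v :: "real ^ 'n"
  proof -
    have "(\<Sum>i=0..k. fps_nth (of_nat i * vec_fps (0 :: real ^ 'n) ^ (i - 1) * vec_fps v) k / fact i)
        = (\<Sum>i=0..k. if i = 1 then fps_nth (vec_fps v) k else 0)"
      by (intro sum.cong refl) (auto simp: power_0_left)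
    also have "\<dots> = fps_nth (vec_fps v) k"
      by (cases k) auto
    finally show ?thesis .
  qed
  ultimately show ?thesis
    by (simp add: fps_Exp_nth)
qed

lemma has_derivative_fps_Exp_vec_fps_mult:
  "((\<lambda>y. fps_nth (fps_Exp (vec_fps y) * C) m) has_derivative
     (\<lambda>v. fps_nth (fps_Exp (vec_fps x) * vec_fps v * C) m)) (at (x :: real ^ 'n))"
proof -
  have shifted: "((\<lambda>y. fps_nth (fps_Exp (vec_fps (y - x))) k) has_derivative (\<lambda>v. fps_nth (vec_fps v) k)) (at x)" for k
    using has_derivative_compose[OF has_derivative_diff[OF has_derivative_ident has_derivative_const]
        has_derivative_fps_Exp_vec_fps_at_0[where 'n='n, of k, folded diff_self[of x]]]
    by simp
  have Exp_mult: "(\<lambda>y. fps_nth (fps_Exp (vec_fps y) * C) m)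
      = (\<lambda>y. \<Sum>k=0..m. fps_nth (fps_Exp (vec_fps (y - x))) k * fps_nth (fps_Exp (vec_fps x) * C) (m - k))"
    by (subst fps_Exp_vec_fps_shift[of _ x]) (simp add: fps_mult_nth[symmetric] algebra_simps)
  have Exp_deriv_mult: "(\<lambda>v. fps_nth (fps_Exp (vec_fps x) * vec_fps v * C) m)
      = (\<lambda>v. \<Sum>k=0..m. fps_nth (vec_fps v) k * fps_nth (fps_Exp (vec_fps x) * C) (m - k))"
    by (simp add: fps_mult_nth[symmetric] algebra_simps)
  show ?thesis
    unfolding Exp_mult Exp_deriv_mult using shifted by (intro has_derivative_sum has_derivative_mult_left)
qed

section \<open>The embedding\<close>

definition exp_coeffs :: "real fps \<Rightarrow> real ^ 'n \<Rightarrow> real ^ 'm" where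
  "exp_coeffs C x = coeff_vec (fps_Exp (vec_fps x) * C)"

lemma has_derivative_exp_coeffs:
  "(exp_coeffs C has_derivative (\<lambda>v. exp_coeffs (vec_fps v * C) x)) (at x)"
  unfolding exp_coeffs_def coeff_vec_def
  by (rule has_derivative_vec_componentwise)
    (simp add: mult.assoc has_derivative_fps_Exp_vec_fps_mult[of C _ x, unfolded mult.assoc])

lemma smooth_map_exp_coeffs: "smooth_map (exp_coeffs C :: real ^ 'n \<Rightarrow> real ^ 'm)"
proof (coinduction arbitrary: C rule: smooth_map.coinduct)
  \<comment> \<open>Every directional derivative of \<open>exp_coeffs C\<close> is again of the form \<open>exp_coeffs C'\<close>.\<close>
  case smooth_map
  show ?case
    by (intro exI[of _ "exp_coeffs C"] exI[of _ "\<lambda>x v. exp_coeffs (vec_fps v * C) x"])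
      (auto intro: has_derivative_exp_coeffs)
qed

lemma frechet_derivative_exp_coeffs:
  "frechet_derivative (exp_coeffs C) (at x) = (\<lambda>v. exp_coeffs (vec_fps v * C) x)"
  by (rule frechet_derivative_at[OF has_derivative_exp_coeffs, symmetric])

lemma linear_exp_coeffs_deriv:
  fixes x :: "real ^ 'n"
  shows "linear (\<lambda>v :: real ^ 'n. exp_coeffs (vec_fps v * C) x :: real ^ 'm)"
  by (rule has_derivative_linear[OF has_derivative_exp_coeffs])

lemma exp_coeffs_add: "exp_coeffs (C + C') x = exp_coeffs C x + exp_coeffs C' x"
  by (simp add: exp_coeffs_def coeff_vec_def vec_eq_iff algebra_simps)

lemma exp_coeffs_diff: "exp_coeffs (C - C') x = exp_coeffs C x - exp_coeffs C' x"
  by (simp add: exp_coeffs_def coeff_vec_def vec_eq_iff algebra_simps)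

lemma exp_coeffs_fps_const_mult: "exp_coeffs (fps_const c * C) x = c *\<^sub>R exp_coeffs C x"
  by (simp add: exp_coeffs_def coeff_vec_def vec_eq_iff mult.left_commute[of _ "fps_const c"])

lemma exp_coeffs_shift: "exp_coeffs C y = exp_coeffs (fps_Exp (vec_fps (y - x)) * C) x"
  by (simp add: exp_coeffs_def fps_Exp_vec_fps_shift[of y x] mult.assoc)

lemma agree_upto_if_exp_coeffs_eq:
  assumes "(exp_coeffs U x :: real ^ 'm) = exp_coeffs V x" "fps_nth U 0 = fps_nth V 0"
  shows "agree_upto CARD('m) U V"
proof (rule agree_upto_fps_Exp_cancel)
  show "agree_upto CARD('m) (fps_Exp (vec_fps x) * U) (fps_Exp (vec_fps x) * V)"
    using assms by (intro agree_upto_if_coeff_vec_eq) (simp_all add: exp_coeffs_def)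
qed simp

lemma exp_coeffs_vec_fps_eq_0_iff:
  fixes h p :: "real ^ 'n"
  assumes "CARD('n) \<le> CARD('m)"
  shows "(exp_coeffs (vec_fps h) p :: real ^ 'm) = 0 \<longleftrightarrow> h = 0"
proof
  assume "(exp_coeffs (vec_fps h) p :: real ^ 'm) = 0"
  then have "agree_upto CARD('m) (vec_fps h) 0"
    by (intro agree_upto_if_exp_coeffs_eq[of _ p]) (simp_all add: exp_coeffs_def)
  then have "(coeff_vec (vec_fps h) :: real ^ 'n) = coeff_vec 0"
    by (rule coeff_vec_eq_if_agree_upto[OF _ assms])
  then show "h = 0"
    by simp
qed (simp add: exp_coeffs_def)

lemma inj_frechet_derivative_exp_coeffs:
  assumes "CARD('n) \<le> CARD('m)"
  shows "inj (frechet_derivative (exp_coeffs 1 :: real ^ 'n \<Rightarrow> real ^ 'm) (at p))"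
proof -
  have "linear (\<lambda>v :: real ^ 'n. exp_coeffs (vec_fps v) p :: real ^ 'm)"
    using linear_exp_coeffs_deriv[of 1 p] by simp
  then show ?thesis
    unfolding frechet_derivative_exp_coeffs
    by (simp add: linear_injective_0 exp_coeffs_vec_fps_eq_0_iff[OF assms])
qed

lemma inj_exp_coeffs_square: "inj (exp_coeffs 1 :: real ^ 'n \<Rightarrow> real ^ 'n)"
proof (rule injI)
  fix x y :: "real ^ 'n"
  assume "(exp_coeffs 1 x :: real ^ 'n) = exp_coeffs 1 y"
  then have "agree_upto CARD('n) 1 (fps_Exp (vec_fps (y - x)))"
    by (intro agree_upto_if_exp_coeffs_eq[of _ x]) (simp_all add: exp_coeffs_shift[of 1 y x])
  then have "agree_upto CARD('n) (vec_fps (y - x)) 0"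
    by (intro agree_upto_fps_Exp_eq_1) (simp_all add: agree_upto_def)
  then have "(coeff_vec (vec_fps (y - x)) :: real ^ 'n) = coeff_vec 0"
    by (rule coeff_vec_eq_if_agree_upto[OF _ order_refl])
  then show "x = y"
    by simp
qed

lemma homeomorphism_range_if_inj_projection:
  fixes f :: "'a::euclidean_space \<Rightarrow> 'b::topological_space" and P :: "'b \<Rightarrow> 'a"
  assumes "continuous_on UNIV f" "continuous_on (range f) P" "inj (P \<circ> f)"
  shows "\<exists>g. homeomorphism UNIV (range f) f g"
proof -
  have "continuous_on (range (P \<circ> f)) (inv (P \<circ> f))"
  proof (rule continuous_on_inverse_open)
    show "continuous_on UNIV (P \<circ> f)"
      using assms(1,2) by (rule continuous_on_compose)
    show "inv (P \<circ> f) ((P \<circ> f) x) = x" for x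
      using assms(3) by (rule inv_f_f)
  qed simp_all
  then have "continuous_on (range f) (inv (P \<circ> f) \<circ> P)"
    using continuous_on_compose[OF assms(2)] by (simp add: image_comp)
  moreover have "(inv (P \<circ> f) \<circ> P) (f x) = x" for x
    using inv_f_f[OF assms(3)] by simp
  ultimately have "homeomorphism UNIV (range f) f (inv (P \<circ> f) \<circ> P)"
    using assms(1) by (auto simp: homeomorphism_def image_iff)
  then show ?thesis
    by blast
qed

lemma exp_coeffs_homeomorphism:
  assumes "CARD('n) \<le> CARD('m)"
  shows "\<exists>g. homeomorphism (UNIV :: (real ^ 'n) set) (range (exp_coeffs 1 :: real ^ 'n \<Rightarrow> real ^ 'm))
           (exp_coeffs 1) g"
proof -
  define P :: "real ^ 'm \<Rightarrow> real ^ 'n" where "P y = coeff_vec (vec_fps y)" for y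
  have "continuous_on UNIV (exp_coeffs 1 :: real ^ 'n \<Rightarrow> real ^ 'm)"
    by (intro continuous_at_imp_continuous_on ballI has_derivative_continuous[OF has_derivative_exp_coeffs])
  moreover have "(P has_derivative P) (at y)" for y
    unfolding P_def coeff_vec_def
    using has_coeffwise_derivative_vec_fps[of y] unfolding has_coeffwise_derivative_def
    by (intro has_derivative_vec_componentwise) simp
  then have "continuous_on (range (exp_coeffs 1 :: real ^ 'n \<Rightarrow> real ^ 'm)) P"
    by (intro continuous_at_imp_continuous_on ballI has_derivative_continuous)
  moreover have "P \<circ> (exp_coeffs 1 :: real ^ 'n \<Rightarrow> real ^ 'm) = exp_coeffs 1"
  proof
    fix x :: "real ^ 'n"
    show "(P \<circ> exp_coeffs 1) x = (exp_coeffs 1 x :: real ^ 'n)"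
      unfolding P_def exp_coeffs_def o_def by (rule coeff_vec_vec_fps_coeff_vec[OF assms])
  qed
  then have "inj (P \<circ> (exp_coeffs 1 :: real ^ 'n \<Rightarrow> real ^ 'm))"
    using inj_exp_coeffs_square by simp
  ultimately show ?thesis
    by (rule homeomorphism_range_if_inj_projection)
qed

section \<open>Total skewness\<close>

lemma totally_skew_at_if_independent:
  fixes f :: "'a::euclidean_space \<Rightarrow> 'b::euclidean_space"
  assumes indep: "\<And>u v s t l. u \<in> range (frechet_derivative f (at p)) \<Longrightarrow> u \<noteq> 0 \<Longrightarrow>
      v \<in> range (frechet_derivative f (at q)) \<Longrightarrow> v \<noteq> 0 \<Longrightarrow>
      s *\<^sub>R u + t *\<^sub>R v + l *\<^sub>R (f q - f p) = 0 \<Longrightarrow> s = 0 \<and> t = 0 \<and> l = 0"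
  shows "totally_skew_at f p q"
  unfolding totally_skew_at_def
proof (intro ballI conjI)
  fix L1 L2
  assume "L1 \<in> tangent_lines f p" "L2 \<in> tangent_lines f q"
  then obtain u v where u: "u \<in> range (frechet_derivative f (at p))" "u \<noteq> 0"
      and v: "v \<in> range (frechet_derivative f (at q))" "v \<noteq> 0"
      and L1: "L1 = {f p + t *\<^sub>R u | t. True}" and L2: "L2 = {f q + t *\<^sub>R v | t. True}"
    unfolding tangent_lines_def by blast
  show "\<not> parallel_sets L1 L2"
  proof
    assume "parallel_sets L1 L2"
    then obtain c where c: "L2 = (\<lambda>x. c + x) ` L1"
      unfolding parallel_sets_def by blast
    have "f q \<in> L2" "f q + v \<in> L2"
      unfolding L2 by (auto intro!: exI[of _ 0] exI[of _ 1])
    then obtain t1 t2 where "f q = c + (f p + t1 *\<^sub>R u)" "f q + v = c + (f p + t2 *\<^sub>R u)"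
      unfolding c L1 by blast
    then have "(t1 - t2) *\<^sub>R u + 1 *\<^sub>R v + 0 *\<^sub>R (f q - f p) = 0"
      by (simp add: algebra_simps)
    then show False
      using indep[OF u v, of "t1 - t2" 1 0] by simp
  qed
  show "L1 \<inter> L2 = {}"
  proof (rule ccontr)
    assume "L1 \<inter> L2 \<noteq> {}"
    then obtain s t where "f p + s *\<^sub>R u = f q + t *\<^sub>R v"
      unfolding L1 L2 by auto
    then have "s *\<^sub>R u + (- t) *\<^sub>R v + (- 1) *\<^sub>R (f q - f p) = 0"
      by (simp add: algebra_simps)
    then show False
      using indep[OF u v, of s "- t" "- 1"] by simp
  qed
qed

lemma exp_coeffs_tangent_independent:
  fixes p q h k :: "real ^ 'n"
  assumes "p \<noteq> q" "3 * CARD('n) \<le> CARD('m)"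
    and "exp_coeffs (vec_fps h) p + exp_coeffs (vec_fps k) q + l *\<^sub>R (exp_coeffs 1 q - exp_coeffs 1 p)
      = (0 :: real ^ 'm)"
  shows "h = 0 \<and> k = 0 \<and> l = 0"
proof -
  define D where "D = vec_poly (q - p)"
  define M where "M = vec_poly k + [:l:]"
  define A where "A = [:l:] - vec_poly h"
  have "exp_coeffs (fps_Exp (fps_of_poly D) * fps_of_poly M) p = (exp_coeffs (fps_of_poly A) p :: real ^ 'm)"
    \<comment> \<open>rewrite everything at \<open>p\<close> using \<open>exp X_q = exp X_p * exp D\<close>\<close>
    using assms(3)
    by (simp add: D_def M_def A_def fps_of_poly_add fps_of_poly_diff fps_of_poly_const
        exp_coeffs_shift[of _ q p] exp_coeffs_add exp_coeffs_diff distrib_left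
        exp_coeffs_fps_const_mult[symmetric] algebra_simps flip: vec_fps_def)
  then have "agree_upto CARD('m) (fps_Exp (fps_of_poly D) * fps_of_poly M) (fps_of_poly A)"
    by (rule agree_upto_if_exp_coeffs_eq) (simp add: M_def A_def)
  then have agree: "agree_upto (3 * CARD('n)) (fps_Exp (fps_of_poly D) * fps_of_poly M) (fps_of_poly A)"
    using assms(2) by (rule agree_upto_mono)
  have "M = 0"
  proof (rule fps_Exp_mult_agree_poly_imp_0[OF _ _ _ _ _ _ agree])
    show "degree D \<le> CARD('n)" "degree M \<le> CARD('n)" "degree A \<le> CARD('n)"
      using degree_vec_poly[of "q - p"] degree_add_le[OF degree_vec_poly[of k], of "[:l:]"]
        degree_diff_le[of "[:l:]" _ "vec_poly h", OF _ degree_vec_poly]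
      by (simp_all add: D_def M_def A_def)
    show "D \<noteq> 0"
      using assms(1) by (simp add: D_def)
  qed (simp_all add: D_def)
  moreover have "coeff M 0 = l"
    by (simp add: M_def)
  ultimately have "l = 0"
    by simp
  with \<open>M = 0\<close> have "k = 0"
    by (simp add: M_def)
  have "agree_upto (3 * CARD('n)) (vec_fps h) 0"
    using agree \<open>M = 0\<close> \<open>l = 0\<close> by (simp add: A_def agree_upto_def fps_nth_vec_fps)
  then have "(coeff_vec (vec_fps h) :: real ^ 'n) = coeff_vec 0"
    by (rule coeff_vec_eq_if_agree_upto) simp
  with \<open>l = 0\<close> \<open>k = 0\<close> show ?thesis
    by simp
qed

lemma totally_skew_at_exp_coeffs:
  fixes p q :: "real ^ 'n"
  assumes "p \<noteq> q" "3 * CARD('n) \<le> CARD('m)"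
  shows "totally_skew_at (exp_coeffs 1 :: real ^ 'n \<Rightarrow> real ^ 'm) p q"
proof (rule totally_skew_at_if_independent)
  fix u v :: "real ^ 'm" and s t l
  assume "u \<in> range (frechet_derivative (exp_coeffs 1) (at p))" "u \<noteq> 0"
    and "v \<in> range (frechet_derivative (exp_coeffs 1) (at q))" "v \<noteq> 0"
    and comb: "s *\<^sub>R u + t *\<^sub>R v + l *\<^sub>R (exp_coeffs 1 q - exp_coeffs 1 p) = 0"
  then obtain h k :: "real ^ 'n" where u: "u = exp_coeffs (vec_fps h) p" and v: "v = exp_coeffs (vec_fps k) q"
    by (auto simp: frechet_derivative_exp_coeffs)
  have "s *\<^sub>R h = 0 \<and> t *\<^sub>R k = 0 \<and> l = 0"
    using comb assms by (intro exp_coeffs_tangent_independent) (simp_all add: u v vec_fps_scaleR exp_coeffs_fps_const_mult)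
  moreover have "h \<noteq> 0" "k \<noteq> 0"
    using \<open>u \<noteq> 0\<close> \<open>v \<noteq> 0\<close> by (auto simp: u v exp_coeffs_def)
  ultimately show "s = 0 \<and> t = 0 \<and> l = 0"
    by simp
qed

theorem corollary3p2:
  shows "\<exists>f :: real ^ 'n \<Rightarrow> real ^ ('n \<times> 3). totally_skew_embedding f"
proof
  have card: "CARD('n \<times> 3) = 3 * CARD('n)"
    by simp
  show "totally_skew_embedding (exp_coeffs 1 :: real ^ 'n \<Rightarrow> real ^ ('n \<times> 3))"
    unfolding totally_skew_embedding_def smooth_embedding_def
  proof (intro conjI allI impI)
    show "smooth_map (exp_coeffs 1 :: real ^ 'n \<Rightarrow> real ^ ('n \<times> 3))"
      by (rule smooth_map_exp_coeffs)
    show "inj (frechet_derivative (exp_coeffs 1 :: real ^ 'n \<Rightarrow> real ^ ('n \<times> 3)) (at p))" for p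
      by (rule inj_frechet_derivative_exp_coeffs) (simp add: card)
    show "\<exists>g. homeomorphism (UNIV :: (real ^ 'n) set)
        (range (exp_coeffs 1 :: real ^ 'n \<Rightarrow> real ^ ('n \<times> 3))) (exp_coeffs 1) g"
      by (rule exp_coeffs_homeomorphism) (simp add: card)
    show "totally_skew_at (exp_coeffs 1 :: real ^ 'n \<Rightarrow> real ^ ('n \<times> 3)) p q" if "p \<noteq> q" for p q
      using that by (rule totally_skew_at_exp_coeffs) (simp add: card)
  qed
qed

end
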